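(* Consider the model below with $M=M_f=N=1$ and $\epsilon_2\ge0$, and let $\bar{\epsilon}_{RPE}\in[-\infty,\infty)$ be the number such that a restricted perceptions equilibrium (RPE) exists if and only if $\epsilon_1\ge\bar{\epsilon}_{RPE}$. If $\epsilon_1>\bar{\epsilon}_{RPE}$, then (i) there is exactly one E-stable RPE, and (ii) it is of type PP or of type ZP.
   Context: Parameters: $0<\beta<1$, $\sigma,\lambda,\mu>0$, $\psi>1$, $p,q\in(0,1]$ with $(p,q)\neq(1,1)$. The shock $\epsilon_t$ is a two-state Markov chain on $\{\epsilon_1,\epsilon_2\}$ with $\Pr(\epsilon_{t+1}=\epsilon_1\mid\epsilon_t=\epsilon_1)=p$, $\Pr(\epsilon_{t+1}=\epsilon_2\mid\epsilon_t=\epsilon_2)=q$; $\bar q:=(1-p)/(2-p-q)$. Model: $x_t=\hat E_t x_{t+1}-\sigma(i_t-\hat E_t\pi_{t+1})+\epsilon_t$, $\pi_t=\lambda x_t+\beta\hat E_t\pi_{t+1}$, $i_t=\max\{\psi\pi_t,-\mu\}$. An RPE is a pair $Y_j=(x_j,\pi_j)$, $j=1,2$, such that with $\bar Y=(\bar x,\bar\pi):=\bar qY_2+(1-\bar q)Y_1$ and $i_j=\max\{\psi\pi_j,-\mu\}$: $x_j=\bar x-\sigma(i_j-\bar\pi)+\epsilon_j$, $\pi_j=\lambda x_j+\beta\bar\pi$ for $j=1,2$. Types: the ZLB binds in state $j$ if $\psi\pi_j\le-\mu$; type PP (binds in no state), ZP (state 1 only), PZ (state 2 only), ZZ (both). Let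 $A_P=\frac{1}{1+\lambda\sigma\psi}\begin{pmatrix}1&\sigma-\beta\sigma\psi\\ \lambda&\beta+\lambda\sigma\end{pmatrix}$, $A_Z=\begin{pmatrix}1&\sigma\\ \lambda&\beta+\lambda\sigma\end{pmatrix}$, $I$ the $2\times2$ identity, and $DT^{PP}=A_P-I$, $DT^{ZP}=\bar qA_P+(1-\bar q)A_Z-I$, $DT^{PZ}=(1-\bar q)A_P+\bar qA_Z-I$, $DT^{ZZ}=A_Z-I$. An RPE of type $i$ is E-stable if all eigenvalues of $DT^i$ have negative real parts. *)

theory Defs
  imports "HOL-Analysis.Analysis"
begin

text \<open>Two-state New Keynesian model with ZLB (normalisation M = M_f = N = 1 already built in).
  Parameters: beta, sig, lam (= lambda), mu, psi, transition probabilities p q, shocks e1 e2.\<close>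

definition qbar :: "real \<Rightarrow> real \<Rightarrow> real" where
  "qbar p q = (1 - p) / (2 - p - q)"

definition is_RPE ::
  "real \<Rightarrow> real \<Rightarrow> real \<Rightarrow> real \<Rightarrow> real \<Rightarrow> real \<Rightarrow> real \<Rightarrow> real \<Rightarrow> real \<Rightarrow>
   (real \<times> real) \<Rightarrow> (real \<times> real) \<Rightarrow> bool" where
  "is_RPE beta sig lam mu psi p q e1 e2 Y1 Y2 =
    (let qb = qbar p q;
         x1 = fst Y1; pi1 = snd Y1; x2 = fst Y2; pi2 = snd Y2;
         xbar = qb * x2 + (1 - qb) * x1;
         pibar = qb * pi2 + (1 - qb) * pi1;
         i1 = max (psi * pi1) (- mu);
         i2 = max (psi * pi2) (- mu)
     in x1 = xbar - sig * (i1 - pibar) + e1 \<and> pi1 = lam * x1 + beta * pibar \<and>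
        x2 = xbar - sig * (i2 - pibar) + e2 \<and> pi2 = lam * x2 + beta * pibar)"

datatype rpe_type = PP | ZP | PZ | ZZ

definition zlb_binds :: "real \<Rightarrow> real \<Rightarrow> real \<Rightarrow> bool" where
  "zlb_binds mu psi pi_j = (psi * pi_j \<le> - mu)"

definition type_of_RPE :: "real \<Rightarrow> real \<Rightarrow> (real \<times> real) \<Rightarrow> (real \<times> real) \<Rightarrow> rpe_type" where
  "type_of_RPE mu psi Y1 Y2 =
    (if zlb_binds mu psi (snd Y1)
     then (if zlb_binds mu psi (snd Y2) then ZZ else ZP)
     else (if zlb_binds mu psi (snd Y2) then PZ else PP))"

definition mat2 :: "real \<Rightarrow> real \<Rightarrow> real \<Rightarrow> real \<Rightarrow> real^2^2" where
  "mat2 a b c d = vector [vector [a, b], vector [c, d]]"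

definition A_P :: "real \<Rightarrow> real \<Rightarrow> real \<Rightarrow> real \<Rightarrow> real^2^2" where
  "A_P beta sig lam psi =
     (1 / (1 + lam * sig * psi)) *\<^sub>R mat2 1 (sig - beta * sig * psi) lam (beta + lam * sig)"

definition A_Z :: "real \<Rightarrow> real \<Rightarrow> real \<Rightarrow> real^2^2" where
  "A_Z beta sig lam = mat2 1 sig lam (beta + lam * sig)"

definition DT :: "rpe_type \<Rightarrow> real \<Rightarrow> real \<Rightarrow> real \<Rightarrow> real \<Rightarrow> real \<Rightarrow> real \<Rightarrow> real^2^2" where
  "DT t beta sig lam psi p q =
    (let qb = qbar p q; AP = A_P beta sig lam psi; AZ = A_Z beta sig lam in
     case t of
       PP \<Rightarrow> AP - mat 1
     | ZP \<Rightarrow> qb *\<^sub>R AP + (1 - qb) *\<^sub>R AZ - mat 1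
     | PZ \<Rightarrow> (1 - qb) *\<^sub>R AP + qb *\<^sub>R AZ - mat 1
     | ZZ \<Rightarrow> AZ - mat 1)"

definition cmat :: "real^2^2 \<Rightarrow> complex^2^2" where
  "cmat A = (\<chi> i j. complex_of_real (A $ i $ j))"

definition is_eigenvalue :: "real^2^2 \<Rightarrow> complex \<Rightarrow> bool" where
  "is_eigenvalue A z = (det (mat z - cmat A) = 0)"

definition E_stable ::
  "real \<Rightarrow> real \<Rightarrow> real \<Rightarrow> real \<Rightarrow> real \<Rightarrow> real \<Rightarrow> real \<Rightarrow>
   (real \<times> real) \<Rightarrow> (real \<times> real) \<Rightarrow> bool" where
  "E_stable beta sig lam mu psi p q Y1 Y2 =
    (\<forall>z. is_eigenvalue (DT (type_of_RPE mu psi Y1 Y2) beta sig lam psi p q) z \<longrightarrow> Re z < 0)"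

end

theory Submission
  imports Defs
begin

(*
  Eliminating output, inflation in state j solves pi + lam sig max (psi pi) (-mu) = pressure e_j P,
  where P is mean (expected) inflation.  The left side is increasing and piecewise linear in pi,
  so pi = infl (pressure e_j P) with infl concave, and RPEs correspond to the roots of the
  concave function gap P = (mean realised inflation) - P.  The E-stability matrix is a convex
  combination of A_P and A_Z weighted by the mass of the unconstrained states, and by
  Routh-Hurwitz it is stable iff the slope of gap at the root is negative.  A concave function
  has at most one root of negative slope, and has one as soon as it is positive somewhere,
  since gap eventually decreases linearly.  Positivity at e1 comes from an RPE at some e' < e1,
  as gap is strictly increasing in e1 (when state 1 has positive weight).  At a stable root the
  ZLB cannot bind in state 2: binding in both states gives slope lam sig > 0, and binding only
  in state 2 forces P < 0 <= gap 0, against the decrease of gap to the right of a stable root.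
*)

section \<open>Hurwitz stability of real 2x2 matrices\<close>

lemma trace_2: "trace (A::'a::comm_semiring_1^2^2) = A$1$1 + A$2$2"
  by (simp add: trace_def UNIV_2)

lemma is_eigenvalue_iff_char_poly:
  "is_eigenvalue A z \<longleftrightarrow> z\<^sup>2 - of_real (trace A) * z + of_real (det A) = 0"
  unfolding is_eigenvalue_def det_2 trace_2 cmat_def mat_def
  by (simp add: algebra_simps power2_eq_square)

lemma quadratic_roots_Re_neg_iff:
  fixes T D :: real
  shows "(\<forall>z::complex. z\<^sup>2 - of_real T * z + of_real D = 0 \<longrightarrow> Re z < 0) \<longleftrightarrow> T < 0 \<and> D > 0"
proof
  assume roots: "\<forall>z::complex. z\<^sup>2 - of_real T * z + of_real D = 0 \<longrightarrow> Re z < 0"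
  show "T < 0 \<and> D > 0"
  proof (rule ccontr)
    assume unstable: "\<not> (T < 0 \<and> D > 0)"
    have "\<exists>z::complex. z\<^sup>2 - of_real T * z + of_real D = 0 \<and> Re z \<ge> 0"
    proof (cases "4 * D \<le> T\<^sup>2")
      case True
      define x where "x = (T + sqrt (T\<^sup>2 - 4 * D)) / 2"
      have "x\<^sup>2 - T * x + D = 0"
        using True unfolding x_def by (simp add: power2_eq_square field_simps)
      then have root: "(of_real x)\<^sup>2 - of_real T * of_real x + of_real D = (0::complex)"
        by (metis of_real_0 of_real_add of_real_diff of_real_mult of_real_power)
      have "\<bar>T\<bar> \<le> sqrt (T\<^sup>2 - 4 * D)" if "D \<le> 0"
        using that real_sqrt_le_mono[of "T\<^sup>2" "T\<^sup>2 - 4 * D"] by simp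
      then have "x \<ge> 0"
        using unstable True unfolding x_def by (cases "D \<le> 0") (auto intro: add_nonneg_nonneg)
      then show ?thesis using root by (intro exI[of _ "of_real x"]) simp
    next
      case False
      define y where "y = sqrt (4 * D - T\<^sup>2) / 2"
      have "4 * y\<^sup>2 = 4 * D - T\<^sup>2" using False unfolding y_def by (simp add: power_divide)
      then have "(Complex (T / 2) y)\<^sup>2 - of_real T * Complex (T / 2) y + of_real D = 0"
        by (simp add: complex_eq_iff power2_eq_square algebra_simps)
      moreover have "0 \<le> T" using False unstable by (smt (verit) zero_le_power2)
      ultimately show ?thesis by (intro exI[of _ "Complex (T / 2) y"]) simp
    qed
    then show False using roots by force
  qed
next
  assume TD: "T < 0 \<and> D > 0"
  show "\<forall>z::complex. z\<^sup>2 - of_real T * z + of_real D = 0 \<longrightarrow> Re z < 0"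
  proof (intro allI impI)
    fix z :: complex
    assume "z\<^sup>2 - of_real T * z + of_real D = 0"
    then have re: "(Re z)\<^sup>2 - (Im z)\<^sup>2 - T * Re z + D = 0" and im: "(2 * Re z - T) * Im z = 0"
      by (simp_all add: complex_eq_iff power2_eq_square algebra_simps)
    show "Re z < 0"
    proof (cases "Im z = 0")
      case True
      then have "(Re z)\<^sup>2 + D = T * Re z" using re by simp
      then show ?thesis using TD by (smt (verit) mult_nonpos_nonneg zero_le_power2)
    next
      case False
      then show ?thesis using im TD by simp
    qed
  qed
qed

lemma eigenvalues_Re_neg_iff_2x2:
  "(\<forall>z. is_eigenvalue A z \<longrightarrow> Re z < 0) \<longleftrightarrow> trace A < 0 \<and> det A > 0"
  unfolding is_eigenvalue_iff_char_poly by (rule quadratic_roots_Re_neg_iff)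

(* Ergodic probability of the states in which the ZLB is slack; state 2 has probability w. *)
definition unconstrained_mass :: "rpe_type \<Rightarrow> real \<Rightarrow> real" where
  "unconstrained_mass t w = (case t of PP \<Rightarrow> 1 | ZP \<Rightarrow> w | PZ \<Rightarrow> 1 - w | ZZ \<Rightarrow> 0)"

lemma DT_eq_mixture:
  "DT t beta sig lam psi p q =
     unconstrained_mass t (qbar p q) *\<^sub>R A_P beta sig lam psi
     + (1 - unconstrained_mass t (qbar p q)) *\<^sub>R A_Z beta sig lam - mat 1"
  by (cases t) (simp_all add: DT_def unconstrained_mass_def Let_def)

lemma trace_det_mixture:
  fixes beta sig lam psi c :: real
  assumes a: "1 + lam * sig * psi \<noteq> 0"
  defines "M \<equiv> c *\<^sub>R A_P beta sig lam psi + (1 - c) *\<^sub>R A_Z beta sig lam - mat 1"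
    and "s \<equiv> c / (1 + lam * sig * psi) + (1 - c)"
  shows "trace M = s * (1 + beta + lam * sig) - 2"
    and "det M = 1 - s * (1 + lam * sig)"
proof -
  define k where "k = c * sig * psi / (1 + lam * sig * psi)"
  have entries: "M$1$1 = s - 1" "M$2$2 = (beta + lam * sig) * s - 1" "M$2$1 = lam * s"
    "M$1$2 = sig * s - beta * k"
    unfolding M_def s_def k_def A_P_def A_Z_def mat2_def
    by (simp_all add: mat_def algebra_simps add_divide_distrib diff_divide_distrib)
  have "lam * k = 1 - s"
    unfolding s_def k_def using a by (simp add: field_simps)
  have "M$1$2 * M$2$1 = s * (lam * sig * s - beta * (lam * k))"
    unfolding entries by (simp add: algebra_simps)
  also have "\<dots> = s * (lam * sig * s - beta * (1 - s))"
    unfolding \<open>lam * k = 1 - s\<close> ..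
  finally have off_diagonal: "M$1$2 * M$2$1 = s * (lam * sig * s - beta * (1 - s))" .
  show "det M = 1 - s * (1 + lam * sig)"
    unfolding det_2 off_diagonal entries(1,2) by (simp add: algebra_simps)
  show "trace M = s * (1 + beta + lam * sig) - 2"
    unfolding trace_2 entries by (simp add: algebra_simps)
qed

lemma mixture_stable_iff:
  fixes beta sig lam psi c :: real
  assumes "0 \<le> beta" "beta < 1" "0 \<le> lam * sig" "1 + lam * sig * psi \<noteq> 0"
  shows "(\<forall>z. is_eigenvalue (c *\<^sub>R A_P beta sig lam psi + (1 - c) *\<^sub>R A_Z beta sig lam - mat 1) z
            \<longrightarrow> Re z < 0)
     \<longleftrightarrow> (1 + lam * sig) * (c / (1 + lam * sig * psi) + (1 - c)) < 1"
proof -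
  define s where "s = c / (1 + lam * sig * psi) + (1 - c)"
  have "s * beta < 1" if "(1 + lam * sig) * s < 1"
  proof (cases "s \<le> 0")
    case True
    then show ?thesis using assms(1) mult_nonpos_nonneg[of s beta] by linarith
  next
    case False
    have "1 * s \<le> (1 + lam * sig) * s" using False assms(3) by (intro mult_right_mono) auto
    then have "s < 1" using that by linarith
    then show ?thesis using False assms(1,2) mult_strict_mono[of s 1 beta 1] by simp
  qed
  then have "(1 + lam * sig) * s < 1 \<longleftrightarrow> s * (1 + beta + lam * sig) - 2 < 0 \<and> 0 < 1 - s * (1 + lam * sig)"
    by (auto simp: algebra_simps)
  then show ?thesis
    unfolding eigenvalues_Re_neg_iff_2x2 trace_det_mixture[OF assms(4)] s_def by simp
qed

section \<open>RPEs as roots of the inflation gap\<close>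

lemma continuous_root_above:
  fixes f :: "real \<Rightarrow> real"
  assumes "continuous_on UNIV f" "0 < f a" "0 < r" "\<And>x. f x \<le> C - r * x"
  shows "\<exists>b>a. f b = 0"
proof -
  define b where "b = max a (C / r) + 1"
  have "C / r < b" unfolding b_def by simp
  then have "C < r * b" using \<open>0 < r\<close> by (simp add: pos_divide_less_eq mult.commute)
  then have "f b \<le> 0" using assms(4)[of b] by simp
  moreover have "a \<le> b" unfolding b_def by simp
  ultimately obtain x where "a \<le> x" "x \<le> b" "f x = 0"
    using IVT2'[of f b 0 a] assms(1,2) continuous_on_subset by force
  moreover have "x \<noteq> a" using \<open>f x = 0\<close> \<open>0 < f a\<close> by auto
  ultimately show ?thesis by (auto simp: order_le_less)
qed

lemma qbar_bounds:
  assumes "p \<le> 1" "q \<le> 1" "\<not> (p = 1 \<and> q = 1)"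
  shows "0 \<le> qbar p q" "qbar p q \<le> 1"
  using assms unfolding qbar_def by (auto simp: divide_le_eq_1)

locale rpe_model =
  fixes beta sig lam mu psi p q :: real
  assumes beta_pos: "0 < beta" and beta_less_1: "beta < 1" and sig_pos: "0 < sig"
    and lam_pos: "0 < lam" and mu_pos: "0 < mu" and psi_gt_1: "1 < psi"
    and qbar_nonneg: "0 \<le> qbar p q" and qbar_le_1: "qbar p q \<le> 1"
begin

abbreviation aP :: real where
  "aP \<equiv> 1 + lam * sig * psi"

abbreviation rate :: "real \<Rightarrow> real" where
  "rate x \<equiv> max (psi * x) (- mu)"

definition zlb_bound :: real where
  "zlb_bound = - mu * aP / psi"

definition infl :: "real \<Rightarrow> real" where
  "infl c = min (c + lam * sig * mu) (c / aP)"

definition infl_slope :: "real \<Rightarrow> real" where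
  "infl_slope c = (if c \<le> zlb_bound then 1 else 1 / aP)"

definition pressure :: "real \<Rightarrow> real \<Rightarrow> real" where
  "pressure e P = (1 + lam * sig) * P + lam * e"

definition gap :: "real \<Rightarrow> real \<Rightarrow> real \<Rightarrow> real" where
  "gap e1 e2 P =
    (1 - qbar p q) * infl (pressure e1 P) + qbar p q * infl (pressure e2 P) - P"

definition gap_slope :: "real \<Rightarrow> real \<Rightarrow> real \<Rightarrow> real" where
  "gap_slope e1 e2 P =
    (1 + lam * sig) * ((1 - qbar p q) * infl_slope (pressure e1 P)
      + qbar p q * infl_slope (pressure e2 P)) - 1"

definition allocation :: "real \<Rightarrow> real \<Rightarrow> real \<times> real" where
  "allocation e P =
    ((infl (pressure e P) - beta * P) / lam, infl (pressure e P))"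

lemma lam_sig_pos: "0 < lam * sig"
  using lam_pos sig_pos by simp

lemma aP_gt: "1 + lam * sig < aP"
  using mult_strict_left_mono[OF psi_gt_1 lam_sig_pos] by simp

lemma aP_pos: "0 < aP"
  using aP_gt lam_sig_pos by linarith

lemma zlb_bound_neg: "zlb_bound < 0"
  unfolding zlb_bound_def using mu_pos aP_pos psi_gt_1 by (simp add: divide_neg_pos)

lemma infl_eq: "infl c = (if c \<le> zlb_bound then c + lam * sig * mu else c / aP)"
proof -
  have expand: "aP * (c + lam * sig * mu) - c = lam * sig * (psi * c + aP * mu)"
    by (simp add: algebra_simps)
  have "c + lam * sig * mu \<le> c / aP \<longleftrightarrow> aP * (c + lam * sig * mu) \<le> c"
    using aP_pos by (simp add: pos_le_divide_eq mult.commute)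
  also have "\<dots> \<longleftrightarrow> lam * sig * (psi * c + aP * mu) \<le> 0"
    using expand by (intro iffI) linarith+
  also have "\<dots> \<longleftrightarrow> psi * c + aP * mu \<le> 0"
    using lam_pos sig_pos by (simp add: mult_le_0_iff)
  also have "\<dots> \<longleftrightarrow> c * psi \<le> - mu * aP"
    by (intro iffI) (simp_all add: algebra_simps)
  also have "\<dots> \<longleftrightarrow> c \<le> zlb_bound"
    unfolding zlb_bound_def by (rule pos_le_divide_eq[symmetric]) (use psi_gt_1 in simp)
  finally show ?thesis unfolding infl_def by (auto simp: min_def)
qed

lemma infl_binds_iff: "psi * infl c \<le> - mu \<longleftrightarrow> c \<le> zlb_bound"
  unfolding infl_eq zlb_bound_def using aP_pos psi_gt_1 by (simp add: field_simps)

lemma infl_inverse: "x + lam * sig * rate x = c \<longleftrightarrow> x = infl c"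
proof -
  have "infl c + lam * sig * rate (infl c) = c"
  proof (cases "c \<le> zlb_bound")
    case True
    then show ?thesis using infl_binds_iff[of c] by (simp add: infl_eq)
  next
    case False
    then have "rate (infl c) = psi * (c / aP)" using infl_binds_iff[of c] by (simp add: infl_eq)
    then show ?thesis using False aP_pos by (simp add: infl_eq field_simps)
  qed
  moreover have "strict_mono (\<lambda>x. x + lam * sig * rate x)"
    using lam_sig_pos psi_gt_1
    by (intro strict_monoI add_less_le_mono mult_left_mono max.mono) auto
  ultimately show ?thesis
    using strict_mono_eq[of "\<lambda>x. x + lam * sig * rate x" x "infl c"] by simp
qed

lemma infl_supergradient: "infl x \<le> infl y + infl_slope y * (x - y)"
proof -
  have "infl y + infl_slope y * (x - y) = (if y \<le> zlb_bound then x + lam * sig * mu else x / aP)"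
    unfolding infl_slope_def infl_eq[of y] by (simp add: diff_divide_distrib)
  then show ?thesis unfolding infl_def by simp
qed

lemma infl_strict_mono: "strict_mono infl"
  unfolding infl_def using aP_pos
  by (intro strict_monoI) (simp add: min_less_iff_conj min_less_iff_disj divide_strict_right_mono)

lemma infl_nonneg: "0 \<le> c \<Longrightarrow> 0 \<le> infl c"
  unfolding infl_def using aP_pos lam_sig_pos mu_pos by simp

lemma gap_supergradient: "gap e1 e2 x \<le> gap e1 e2 y + gap_slope e1 e2 y * (x - y)"
proof -
  have shift: "pressure e x - pressure e y = (1 + lam * sig) * (x - y)" for e
    unfolding pressure_def by (simp add: algebra_simps)
  have "(1 - qbar p q) * infl (pressure e1 x) \<le> (1 - qbar p q) *
      (infl (pressure e1 y) + infl_slope (pressure e1 y) * (pressure e1 x - pressure e1 y))"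
    using qbar_le_1 infl_supergradient by (intro mult_left_mono) auto
  moreover have "qbar p q * infl (pressure e2 x) \<le> qbar p q *
      (infl (pressure e2 y) + infl_slope (pressure e2 y) * (pressure e2 x - pressure e2 y))"
    using qbar_nonneg infl_supergradient by (intro mult_left_mono) auto
  ultimately show ?thesis
    unfolding gap_def gap_slope_def shift by (simp add: algebra_simps)
qed

lemma gap_less_right_of_stable:
  assumes "gap_slope e1 e2 y < 0" "y < x"
  shows "gap e1 e2 x < gap e1 e2 y"
  using gap_supergradient[of e1 e2 x y] mult_neg_pos[OF assms(1), of "x - y"] assms(2) by simp

lemma gap_le_left_of_unstable:
  assumes "0 \<le> gap_slope e1 e2 y" "x < y"
  shows "gap e1 e2 x \<le> gap e1 e2 y"
  using gap_supergradient[of e1 e2 x y] mult_nonneg_nonpos[OF assms(1), of "x - y"] assms(2) by simp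

lemma continuous_on_gap: "continuous_on UNIV (gap e1 e2)"
  unfolding gap_def infl_def pressure_def using aP_pos by (intro continuous_intros) auto

lemma gap_le_affine:
  "gap e1 e2 P \<le> (lam * ((1 - qbar p q) * e1 + qbar p q * e2) - lam * sig * (psi - 1) * P) / aP"
proof -
  have "(1 - qbar p q) * infl (pressure e1 P) \<le> (1 - qbar p q) * (pressure e1 P / aP)"
    using qbar_le_1 by (intro mult_left_mono) (auto simp: infl_def)
  moreover have "qbar p q * infl (pressure e2 P) \<le> qbar p q * (pressure e2 P / aP)"
    using qbar_nonneg by (intro mult_left_mono) (auto simp: infl_def)
  ultimately have "gap e1 e2 P \<le> (1 - qbar p q) * (pressure e1 P / aP) + qbar p q * (pressure e2 P / aP) - P"
    unfolding gap_def by linarith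
  also have "\<dots> = ((1 - qbar p q) * pressure e1 P + qbar p q * pressure e2 P - aP * P) / aP"
    using aP_pos by (simp add: diff_divide_distrib add_divide_distrib)
  also have "\<dots> = (lam * ((1 - qbar p q) * e1 + qbar p q * e2) - lam * sig * (psi - 1) * P) / aP"
    by (rule arg_cong[where f = "\<lambda>x. x / aP"]) (simp add: pressure_def algebra_simps)
  finally show ?thesis .
qed

lemma stable_root_exists:
  assumes "0 < gap e1 e2 P0"
  shows "\<exists>P. gap e1 e2 P = 0 \<and> gap_slope e1 e2 P < 0"
proof -
  have "0 < lam * sig * (psi - 1) / aP" using lam_sig_pos psi_gt_1 aP_pos by simp
  moreover have "gap e1 e2 P \<le> lam * ((1 - qbar p q) * e1 + qbar p q * e2) / aP
      - lam * sig * (psi - 1) / aP * P" for P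
    using gap_le_affine[of e1 e2 P] by (simp add: diff_divide_distrib)
  ultimately obtain P where "P0 < P" "gap e1 e2 P = 0"
    using continuous_root_above[OF continuous_on_gap assms] by blast
  moreover have "gap_slope e1 e2 P < 0"
    using gap_le_left_of_unstable[of e1 e2 P P0] \<open>P0 < P\<close> assms \<open>gap e1 e2 P = 0\<close> by force
  ultimately show ?thesis by blast
qed

lemma stable_root_unique:
  assumes "gap e1 e2 P = 0" "gap_slope e1 e2 P < 0" "gap e1 e2 Q = 0" "gap_slope e1 e2 Q < 0"
  shows "P = Q"
  using gap_less_right_of_stable[of e1 e2 P Q] gap_less_right_of_stable[of e1 e2 Q P] assms
  by (cases P Q rule: linorder_cases) auto

lemma allocation_iff_state_equations:
  assumes "lam * X = (1 - beta) * P"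
  shows "(x, \<pi>) = allocation e P \<longleftrightarrow> x = X - sig * (rate \<pi> - P) + e \<and> \<pi> = lam * x + beta * P"
proof -
  have "x = X - sig * (rate \<pi> - P) + e \<and> \<pi> = lam * x + beta * P \<longleftrightarrow>
      lam * x = lam * (X - sig * (rate \<pi> - P) + e) \<and> lam * x = \<pi> - beta * P"
    using lam_pos by auto
  also have "\<dots> \<longleftrightarrow> \<pi> + lam * sig * rate \<pi> = pressure e P \<and> lam * x = \<pi> - beta * P"
    using assms unfolding pressure_def by (auto simp: algebra_simps)
  also have "\<dots> \<longleftrightarrow> \<pi> + lam * sig * rate \<pi> = pressure e P \<and> x = (\<pi> - beta * P) / lam"
    using lam_pos by (auto simp: field_simps)
  finally show ?thesis
    unfolding allocation_def infl_inverse by auto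
qed

lemma is_RPE_iff_gap_root:
  "is_RPE beta sig lam mu psi p q e1 e2 Y1 Y2 \<longleftrightarrow>
    (\<exists>P. gap e1 e2 P = 0 \<and> Y1 = allocation e1 P \<and> Y2 = allocation e2 P)"
proof -
  obtain x1 pi1 x2 pi2 where Y: "Y1 = (x1, pi1)" "Y2 = (x2, pi2)" by fastforce
  define X where "X = qbar p q * x2 + (1 - qbar p q) * x1"
  define P where "P = qbar p q * pi2 + (1 - qbar p q) * pi1"
  have RPE: "is_RPE beta sig lam mu psi p q e1 e2 Y1 Y2 \<longleftrightarrow>
      (x1 = X - sig * (rate pi1 - P) + e1 \<and> pi1 = lam * x1 + beta * P) \<and>
      (x2 = X - sig * (rate pi2 - P) + e2 \<and> pi2 = lam * x2 + beta * P)"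
    unfolding is_RPE_def Y X_def P_def Let_def by auto
  show ?thesis
  proof
    assume "is_RPE beta sig lam mu psi p q e1 e2 Y1 Y2"
    then have eqs: "x1 = X - sig * (rate pi1 - P) + e1" "pi1 = lam * x1 + beta * P"
        "x2 = X - sig * (rate pi2 - P) + e2" "pi2 = lam * x2 + beta * P"
      unfolding RPE by blast+
    have "P = qbar p q * pi2 + (1 - qbar p q) * pi1" by (fact P_def)
    also have "\<dots> = qbar p q * (lam * x2 + beta * P) + (1 - qbar p q) * (lam * x1 + beta * P)"
      using eqs(2,4) by simp
    finally have "lam * X = (1 - beta) * P"
      unfolding X_def by (simp add: algebra_simps)
    note alloc = allocation_iff_state_equations[OF this, THEN iffD2]
    have "Y1 = allocation e1 P" "Y2 = allocation e2 P"
      unfolding Y by (rule alloc[OF conjI[OF eqs(1,2)]], rule alloc[OF conjI[OF eqs(3,4)]])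
    moreover from this have "gap e1 e2 P = 0"
      unfolding gap_def P_def Y allocation_def by simp
    ultimately show "\<exists>P. gap e1 e2 P = 0 \<and> Y1 = allocation e1 P \<and> Y2 = allocation e2 P"
      by blast
  next
    assume "\<exists>P'. gap e1 e2 P' = 0 \<and> Y1 = allocation e1 P' \<and> Y2 = allocation e2 P'"
    then obtain P' where P': "gap e1 e2 P' = 0" "Y1 = allocation e1 P'" "Y2 = allocation e2 P'"
      by blast
    then have pi: "pi1 = infl (pressure e1 P')" "pi2 = infl (pressure e2 P')"
      and x: "lam * x1 = pi1 - beta * P'" "lam * x2 = pi2 - beta * P'"
      unfolding Y allocation_def using lam_pos by auto
    have "P = P'"
      using P'(1) unfolding P_def gap_def pi by simp
    have "lam * X = qbar p q * (lam * x2) + (1 - qbar p q) * (lam * x1)"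
      unfolding X_def by (simp add: algebra_simps)
    also have "\<dots> = P - beta * P'"
      unfolding x P_def by (simp add: algebra_simps)
    finally have "lam * X = (1 - beta) * P"
      using \<open>P = P'\<close> by (simp add: algebra_simps)
    note state = allocation_iff_state_equations[OF this, THEN iffD1]
    have "(x1, pi1) = allocation e1 P" "(x2, pi2) = allocation e2 P"
      using P'(2,3) \<open>P = P'\<close> unfolding Y by simp_all
    then show "is_RPE beta sig lam mu psi p q e1 e2 Y1 Y2"
      unfolding RPE by (intro conjI state)
  qed
qed

lemma zlb_binds_allocation: "zlb_binds mu psi (snd (allocation e P)) \<longleftrightarrow> pressure e P \<le> zlb_bound"
  unfolding zlb_binds_def allocation_def by (simp add: infl_binds_iff)

lemma E_stable_allocation_iff:
  "E_stable beta sig lam mu psi p q (allocation e1 P) (allocation e2 P) \<longleftrightarrow> gap_slope e1 e2 P < 0"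
proof -
  define c where "c = unconstrained_mass (type_of_RPE mu psi (allocation e1 P) (allocation e2 P)) (qbar p q)"
  have "E_stable beta sig lam mu psi p q (allocation e1 P) (allocation e2 P) \<longleftrightarrow>
      (1 + lam * sig) * (c / aP + (1 - c)) < 1"
    unfolding E_stable_def DT_eq_mixture c_def[symmetric]
    using mixture_stable_iff beta_pos beta_less_1 lam_sig_pos aP_pos by simp
  also have "c / aP + (1 - c)
      = (1 - qbar p q) * infl_slope (pressure e1 P) + qbar p q * infl_slope (pressure e2 P)"
    unfolding c_def infl_slope_def type_of_RPE_def zlb_binds_allocation
    by (cases "pressure e1 P \<le> zlb_bound"; cases "pressure e2 P \<le> zlb_bound")
      (simp_all add: unconstrained_mass_def algebra_simps flip: add_divide_distrib)
  finally show ?thesis unfolding gap_slope_def by simp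
qed

lemma stable_RPE_iff_stable_root:
  "is_RPE beta sig lam mu psi p q e1 e2 Y1 Y2 \<and> E_stable beta sig lam mu psi p q Y1 Y2 \<longleftrightarrow>
    (\<exists>P. gap e1 e2 P = 0 \<and> gap_slope e1 e2 P < 0 \<and> Y1 = allocation e1 P \<and> Y2 = allocation e2 P)"
  unfolding is_RPE_iff_gap_root using E_stable_allocation_iff by blast

lemma ex1_stable_RPE:
  assumes "0 < gap e1 e2 P0"
  shows "\<exists>!Y. is_RPE beta sig lam mu psi p q e1 e2 (fst Y) (snd Y) \<and>
              E_stable beta sig lam mu psi p q (fst Y) (snd Y)"
proof -
  obtain P where P: "gap e1 e2 P = 0" "gap_slope e1 e2 P < 0"
    using stable_root_exists[OF assms] by blast
  show ?thesis
  proof (rule ex1I[of _ "(allocation e1 P, allocation e2 P)"])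
    show "is_RPE beta sig lam mu psi p q e1 e2 (fst (allocation e1 P, allocation e2 P))
        (snd (allocation e1 P, allocation e2 P)) \<and>
      E_stable beta sig lam mu psi p q (fst (allocation e1 P, allocation e2 P))
        (snd (allocation e1 P, allocation e2 P))"
      unfolding stable_RPE_iff_stable_root using P by auto
  next
    fix Y
    assume "is_RPE beta sig lam mu psi p q e1 e2 (fst Y) (snd Y) \<and>
      E_stable beta sig lam mu psi p q (fst Y) (snd Y)"
    then obtain Q where "gap e1 e2 Q = 0" "gap_slope e1 e2 Q < 0"
        "fst Y = allocation e1 Q" "snd Y = allocation e2 Q"
      unfolding stable_RPE_iff_stable_root by blast
    moreover from this have "Q = P" using stable_root_unique P by blast
    ultimately show "Y = (allocation e1 P, allocation e2 P)" by (simp add: prod_eq_iff)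
  qed
qed

lemma stable_root_state2_unconstrained:
  assumes "0 \<le> e2" "gap e1 e2 P = 0" "gap_slope e1 e2 P < 0"
  shows "\<not> pressure e2 P \<le> zlb_bound"
proof
  assume binds2: "pressure e2 P \<le> zlb_bound"
  show False
  proof (cases "pressure e1 P \<le> zlb_bound")
    case True
    then have "gap_slope e1 e2 P = lam * sig"
      unfolding gap_slope_def infl_slope_def using binds2 by (simp add: algebra_simps)
    then show False using assms(3) lam_sig_pos by simp
  next
    case False
    then have "lam * e2 < lam * e1" using binds2 unfolding pressure_def by simp
    then have "0 \<le> e1" using assms(1) lam_pos by (simp add: mult_less_cancel_left_pos)
    have "(1 + lam * sig) * P < 0"
      using binds2 zlb_bound_neg assms(1) lam_pos unfolding pressure_def
      by (smt (verit) mult_nonneg_nonneg)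
    then have "P < 0" using lam_sig_pos by (simp add: mult_less_0_iff)
    have "0 \<le> gap e1 e2 0"
      unfolding gap_def pressure_def using \<open>0 \<le> e1\<close> assms(1) lam_pos qbar_nonneg qbar_le_1
      by (simp add: infl_nonneg)
    then show False using gap_less_right_of_stable[OF assms(3) \<open>P < 0\<close>] assms(2) by simp
  qed
qed

lemma stable_RPE_type:
  assumes "0 \<le> e2" "is_RPE beta sig lam mu psi p q e1 e2 Y1 Y2" "E_stable beta sig lam mu psi p q Y1 Y2"
  shows "type_of_RPE mu psi Y1 Y2 = PP \<or> type_of_RPE mu psi Y1 Y2 = ZP"
proof -
  obtain P where P: "gap e1 e2 P = 0" "gap_slope e1 e2 P < 0" "Y2 = allocation e2 P"
    using assms(2,3) stable_RPE_iff_stable_root by blast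
  then have "\<not> zlb_binds mu psi (snd Y2)"
    using stable_root_state2_unconstrained[OF assms(1)] zlb_binds_allocation by simp
  then show ?thesis unfolding type_of_RPE_def by simp
qed

lemma exists_gap_pos:
  assumes "0 \<le> e2" "e' < e1" "gap e' e2 P' = 0"
  shows "\<exists>P0. 0 < gap e1 e2 P0"
proof (cases "qbar p q = 1")
  case True
  define h where "h = zlb_bound / 2"
  have "h < 0" "zlb_bound < h" unfolding h_def using zlb_bound_neg by simp_all
  define P0 where "P0 = h / (1 + lam * sig)"
  have "0 \<le> lam * e2" using assms(1) lam_pos by simp
  have "P0 < h / aP"
    unfolding P0_def using \<open>h < 0\<close> aP_gt lam_sig_pos
    by (intro divide_strict_left_mono_neg) auto
  also have "\<dots> \<le> (h + lam * e2) / aP"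
    using aP_pos \<open>0 \<le> lam * e2\<close> by (simp add: divide_right_mono)
  also have "\<dots> = infl (pressure e2 P0)"
    unfolding pressure_def P0_def using lam_sig_pos \<open>zlb_bound < h\<close> \<open>0 \<le> lam * e2\<close>
    by (simp add: infl_eq)
  finally have "0 < gap e1 e2 P0" unfolding gap_def True by simp
  then show ?thesis by blast
next
  case False
  then have "0 < 1 - qbar p q" using qbar_le_1 by simp
  have "pressure e' P' < pressure e1 P'"
    unfolding pressure_def using assms(2) lam_pos by simp
  then have "infl (pressure e' P') < infl (pressure e1 P')"
    by (rule strict_monoD[OF infl_strict_mono])
  then have "gap e' e2 P' < gap e1 e2 P'"
    unfolding gap_def using \<open>0 < 1 - qbar p q\<close> by simp
  then show ?thesis using assms(3) by auto
qed

end

theorem proposition8: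
  fixes beta sig lam mu psi p q e1 e2 :: real and eps_bar :: ereal
  assumes "0 < beta" "beta < 1" "0 < sig" "0 < lam" "0 < mu" "1 < psi"
    and "0 < p" "p \<le> 1" "0 < q" "q \<le> 1" "\<not> (p = 1 \<and> q = 1)"
    and "e2 \<ge> 0"
    and "eps_bar \<noteq> \<infinity>"
    and threshold: "\<forall>e. (\<exists>Y1 Y2. is_RPE beta sig lam mu psi p q e e2 Y1 Y2) \<longleftrightarrow> ereal e \<ge> eps_bar"
    and "ereal e1 > eps_bar"
  shows "(\<exists>!Y. is_RPE beta sig lam mu psi p q e1 e2 (fst Y) (snd Y) \<and>
               E_stable beta sig lam mu psi p q (fst Y) (snd Y))
       \<and> (\<forall>Y1 Y2. is_RPE beta sig lam mu psi p q e1 e2 Y1 Y2 \<and>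
               E_stable beta sig lam mu psi p q Y1 Y2 \<longrightarrow>
               type_of_RPE mu psi Y1 Y2 = PP \<or> type_of_RPE mu psi Y1 Y2 = ZP)"
proof -
  interpret rpe_model beta sig lam mu psi p q
    using assms(1-11) qbar_bounds[of p q] by unfold_locales auto
  obtain e' where "eps_bar < ereal e'" "e' < e1"
    using ereal_dense2[OF assms(15)] by auto
  then obtain Y1 Y2 where "is_RPE beta sig lam mu psi p q e' e2 Y1 Y2"
    using threshold by (meson less_imp_le)
  then obtain P' where "gap e' e2 P' = 0"
    unfolding is_RPE_iff_gap_root by blast
  then obtain P0 where "0 < gap e1 e2 P0"
    using exists_gap_pos[OF assms(12) \<open>e' < e1\<close>] by blast
  then show ?thesis
    using ex1_stable_RPE stable_RPE_type[OF assms(12)] by blast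
qed

end
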